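(* Let $\mathcal{W}$ be a weakly exact structure on an additive category $\mathcal{A}$. Let $I$ be the class of admissible monics of $\mathcal{W}$ and $\mathcal{D}$ the class of admissible epics of $\mathcal{W}$. Then $I$ is a right weakly exact structure and $\mathcal{D}$ is a left weakly exact structure on $\mathcal{A}$. Consequently every weakly exact structure arises from a pair (left weakly exact structure, right weakly exact structure) by taking all kernel-cokernel pairs $(i,d)$ with $i\in I$, $d\in\mathcal{D}$.
   Context: Let $\mathcal{A}$ be an additive category. A kernel-cokernel pair (short exact sequence) is a pair of composable morphisms $A\xrightarrow{i}B\xrightarrow{d}C$ with $i$ a kernel of $d$ and $d$ a cokernel of $i$. A weakly exact structure on $\mathcal{A}$ is a class $\mathcal{W}$ of kernel-cokernel pairs, closed under isomorphisms of sequences and under finite direct sums of sequences, such that, calling $i$ an admissible monic (resp. $d$ an admissible epic) if $(i,d)\in\mathcal{W}$ for some $d$ (resp. some $i$): (E0) $1_A$ is an admissible monic for every object $A$; (E0)$^{op}$ $1_A$ is an admissible epic for every object $A$; (E2) for every admissible monic $i:A\to B$ and every morphism $t:A\to C$ the pushout of $i$ along $t$ exists and the resulting morphism $C\to S$ is an admissible monic; (E2)$^{op}$ for every admissible epic $h:A\to C$ and every morphism $t:B\to C$ the pullback of $h$ along $t$ exists and the resulting morphism $P\to B$ is an admissible epic. A right weakly exact structure on $\mathcal{A}$ is a class $I$ of morphisms that are kernels, closed under isomorphisms (of arrows), such that: (Id) for every object $X$, $1_X\in I$ and $0\to X$ is in $I$; (P) for every $f:X\to Y$ in $I$ and every morphism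 $h:X\to X'$ the pushout of $f$ along $h$ exists and the resulting morphism $f':X'\to Y'$ lies in $I$; (Q) if $A\xrightarrow{a}B\xrightarrow{b}C$ with $ba\in I$ and $a$ has a cokernel, then $a\in I$; (S) $I$ is closed under direct sums of morphisms. A left weakly exact structure is a class $\mathcal{D}$ of morphisms that are cokernels, closed under isomorphisms, satisfying the dual conditions: (Id$^{op}$) $1_X\in\mathcal{D}$ and $X\to 0$ is in $\mathcal{D}$ for all $X$; (P$^{op}$) pullbacks of morphisms in $\mathcal{D}$ along arbitrary morphisms exist and yield morphisms in $\mathcal{D}$; (Q$^{op}$) if $ba\in\mathcal{D}$ and $b$ has a kernel then $b\in\mathcal{D}$; (S$^{op}$) $\mathcal{D}$ is closed under direct sums of morphisms. *)

theory Defs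
  imports Main
begin

text \<open>Categories with explicit object and arrow carriers; composition
  Comp g f means g after f.  Additive structure on hom-sets.\<close>

record ('o,'m) addcat =
  Obj  :: "'o set"
  Arr  :: "'m set"
  Dom  :: "'m \<Rightarrow> 'o"
  Cod  :: "'m \<Rightarrow> 'o"
  Id   :: "'o \<Rightarrow> 'm"
  Comp :: "'m \<Rightarrow> 'm \<Rightarrow> 'm"
  Add  :: "'m \<Rightarrow> 'm \<Rightarrow> 'm"
  Zero :: "'o \<Rightarrow> 'o \<Rightarrow> 'm"
  Neg  :: "'m \<Rightarrow> 'm"

definition hom :: "('o,'m,'x) addcat_scheme \<Rightarrow> 'o \<Rightarrow> 'o \<Rightarrow> 'm set" where
  "hom C X Y = {f \<in> Arr C. Dom C f = X \<and> Cod C f = Y}"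

definition category :: "('o,'m,'x) addcat_scheme \<Rightarrow> bool" where
  "category C \<longleftrightarrow>
     (\<forall>f \<in> Arr C. Dom C f \<in> Obj C \<and> Cod C f \<in> Obj C) \<and>
     (\<forall>X \<in> Obj C. Id C X \<in> hom C X X) \<and>
     (\<forall>X \<in> Obj C. \<forall>Y \<in> Obj C. \<forall>Z \<in> Obj C. \<forall>f \<in> hom C X Y. \<forall>g \<in> hom C Y Z.
        Comp C g f \<in> hom C X Z) \<and>
     (\<forall>f \<in> Arr C. Comp C f (Id C (Dom C f)) = f \<and> Comp C (Id C (Cod C f)) f = f) \<and>
     (\<forall>f \<in> Arr C. \<forall>g \<in> Arr C. \<forall>h \<in> Arr C. Cod C f = Dom C g \<and> Cod C g = Dom C h \<longrightarrow>
        Comp C h (Comp C g f) = Comp C (Comp C h g) f)"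

definition preadditive :: "('o,'m,'x) addcat_scheme \<Rightarrow> bool" where
  "preadditive C \<longleftrightarrow> category C \<and>
     (\<forall>X \<in> Obj C. \<forall>Y \<in> Obj C.
        Zero C X Y \<in> hom C X Y \<and>
        (\<forall>f \<in> hom C X Y. \<forall>g \<in> hom C X Y. Add C f g \<in> hom C X Y) \<and>
        (\<forall>f \<in> hom C X Y. Neg C f \<in> hom C X Y) \<and>
        (\<forall>f \<in> hom C X Y. \<forall>g \<in> hom C X Y. \<forall>h \<in> hom C X Y.
           Add C (Add C f g) h = Add C f (Add C g h)) \<and>
        (\<forall>f \<in> hom C X Y. \<forall>g \<in> hom C X Y. Add C f g = Add C g f) \<and>
        (\<forall>f \<in> hom C X Y. Add C (Zero C X Y) f = f) \<and>
        (\<forall>f \<in> hom C X Y. Add C (Neg C f) f = Zero C X Y)) \<and>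
     (\<forall>X \<in> Obj C. \<forall>Y \<in> Obj C. \<forall>Z \<in> Obj C. \<forall>f \<in> hom C X Y. \<forall>g \<in> hom C X Y.
        \<forall>h \<in> hom C Y Z. Comp C h (Add C f g) = Add C (Comp C h f) (Comp C h g)) \<and>
     (\<forall>X \<in> Obj C. \<forall>Y \<in> Obj C. \<forall>Z \<in> Obj C. \<forall>f \<in> hom C X Y.
        \<forall>g \<in> hom C Y Z. \<forall>h \<in> hom C Y Z. Comp C (Add C g h) f = Add C (Comp C g f) (Comp C h f))"

text \<open>In a preadditive category, Z is a zero object iff its identity is zero.\<close>
definition zero_obj :: "('o,'m,'x) addcat_scheme \<Rightarrow> 'o \<Rightarrow> bool" where
  "zero_obj C Z \<longleftrightarrow> Z \<in> Obj C \<and> Id C Z = Zero C Z Z"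

definition biprod :: "('o,'m,'x) addcat_scheme \<Rightarrow> 'o \<Rightarrow> 'o \<Rightarrow> 'o \<Rightarrow> 'm \<Rightarrow> 'm \<Rightarrow> 'm \<Rightarrow> 'm \<Rightarrow> bool" where
  "biprod C A B S i1 i2 p1 p2 \<longleftrightarrow> S \<in> Obj C \<and>
     i1 \<in> hom C A S \<and> i2 \<in> hom C B S \<and> p1 \<in> hom C S A \<and> p2 \<in> hom C S B \<and>
     Comp C p1 i1 = Id C A \<and> Comp C p2 i2 = Id C B \<and>
     Comp C p2 i1 = Zero C A B \<and> Comp C p1 i2 = Zero C B A \<and>
     Add C (Comp C i1 p1) (Comp C i2 p2) = Id C S"

definition additive_category :: "('o,'m,'x) addcat_scheme \<Rightarrow> bool" where
  "additive_category C \<longleftrightarrow> preadditive C \<and> (\<exists>Z. zero_obj C Z) \<and>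
     (\<forall>A \<in> Obj C. \<forall>B \<in> Obj C. \<exists>S i1 i2 p1 p2. biprod C A B S i1 i2 p1 p2)"

text \<open>Direct sum f (+) g : S -> T of morphisms, relative to biproduct diagrams
  (S, _, _, p1, p2) of the sources and (T, j1, j2, _, _) of the targets.\<close>
definition dsum :: "('o,'m,'x) addcat_scheme \<Rightarrow> 'm \<Rightarrow> 'm \<Rightarrow> 'm \<Rightarrow> 'm \<Rightarrow> 'm \<Rightarrow> 'm \<Rightarrow> 'm" where
  "dsum C p1 p2 j1 j2 f g = Add C (Comp C j1 (Comp C f p1)) (Comp C j2 (Comp C g p2))"

definition iso :: "('o,'m,'x) addcat_scheme \<Rightarrow> 'm \<Rightarrow> bool" where
  "iso C f \<longleftrightarrow> f \<in> Arr C \<and> (\<exists>g \<in> hom C (Cod C f) (Dom C f).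
      Comp C g f = Id C (Dom C f) \<and> Comp C f g = Id C (Cod C f))"

definition is_kernel_of :: "('o,'m,'x) addcat_scheme \<Rightarrow> 'm \<Rightarrow> 'm \<Rightarrow> bool" where
  "is_kernel_of C i d \<longleftrightarrow> i \<in> Arr C \<and> d \<in> Arr C \<and> Cod C i = Dom C d \<and>
     Comp C d i = Zero C (Dom C i) (Cod C d) \<and>
     (\<forall>X \<in> Obj C. \<forall>g \<in> hom C X (Dom C d). Comp C d g = Zero C X (Cod C d) \<longrightarrow>
        (\<exists>!u. u \<in> hom C X (Dom C i) \<and> Comp C i u = g))"

definition is_cokernel_of :: "('o,'m,'x) addcat_scheme \<Rightarrow> 'm \<Rightarrow> 'm \<Rightarrow> bool" where
  "is_cokernel_of C d i \<longleftrightarrow> i \<in> Arr C \<and> d \<in> Arr C \<and> Cod C i = Dom C d \<and>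
     Comp C d i = Zero C (Dom C i) (Cod C d) \<and>
     (\<forall>X \<in> Obj C. \<forall>g \<in> hom C (Cod C i) X. Comp C g i = Zero C (Dom C i) X \<longrightarrow>
        (\<exists>!u. u \<in> hom C (Cod C d) X \<and> Comp C u d = g))"

definition kcpair :: "('o,'m,'x) addcat_scheme \<Rightarrow> 'm \<Rightarrow> 'm \<Rightarrow> bool" where
  "kcpair C i d \<longleftrightarrow> is_kernel_of C i d \<and> is_cokernel_of C d i"

definition is_kernel :: "('o,'m,'x) addcat_scheme \<Rightarrow> 'm \<Rightarrow> bool" where
  "is_kernel C i \<longleftrightarrow> (\<exists>d. is_kernel_of C i d)"

definition is_cokernel :: "('o,'m,'x) addcat_scheme \<Rightarrow> 'm \<Rightarrow> bool" where
  "is_cokernel C d \<longleftrightarrow> (\<exists>i. is_cokernel_of C d i)"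

definition has_kernel :: "('o,'m,'x) addcat_scheme \<Rightarrow> 'm \<Rightarrow> bool" where
  "has_kernel C d \<longleftrightarrow> (\<exists>i. is_kernel_of C i d)"

definition has_cokernel :: "('o,'m,'x) addcat_scheme \<Rightarrow> 'm \<Rightarrow> bool" where
  "has_cokernel C i \<longleftrightarrow> (\<exists>d. is_cokernel_of C d i)"

text \<open>Pushout square: f : X -> Y, h : X -> X', f' : X' -> Y', h' : Y -> Y',
  with h' o f = f' o h, universal.  f' is the pushout of f along h.\<close>
definition is_pushout :: "('o,'m,'x) addcat_scheme \<Rightarrow> 'm \<Rightarrow> 'm \<Rightarrow> 'm \<Rightarrow> 'm \<Rightarrow> bool" where
  "is_pushout C f h f' h' \<longleftrightarrow> f \<in> Arr C \<and> h \<in> Arr C \<and> f' \<in> Arr C \<and> h' \<in> Arr C \<and>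
     Dom C h = Dom C f \<and> Dom C f' = Cod C h \<and> Dom C h' = Cod C f \<and> Cod C h' = Cod C f' \<and>
     Comp C h' f = Comp C f' h \<and>
     (\<forall>Z \<in> Obj C. \<forall>u \<in> hom C (Cod C f) Z. \<forall>v \<in> hom C (Cod C h) Z.
        Comp C u f = Comp C v h \<longrightarrow>
        (\<exists>!w. w \<in> hom C (Cod C f') Z \<and> Comp C w h' = u \<and> Comp C w f' = v))"

text \<open>Pullback square: d : A -> Cc, t : B -> Cc, d' : P -> B, t' : P -> A,
  with d o t' = t o d', universal.  d' is the pullback of d along t.\<close>
definition is_pullback :: "('o,'m,'x) addcat_scheme \<Rightarrow> 'm \<Rightarrow> 'm \<Rightarrow> 'm \<Rightarrow> 'm \<Rightarrow> bool" where
  "is_pullback C d t d' t' \<longleftrightarrow> d \<in> Arr C \<and> t \<in> Arr C \<and> d' \<in> Arr C \<and> t' \<in> Arr C \<and>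
     Cod C t = Cod C d \<and> Cod C d' = Dom C t \<and> Cod C t' = Dom C d \<and> Dom C t' = Dom C d' \<and>
     Comp C d t' = Comp C t d' \<and>
     (\<forall>Z \<in> Obj C. \<forall>u \<in> hom C Z (Dom C d). \<forall>v \<in> hom C Z (Dom C t).
        Comp C d u = Comp C t v \<longrightarrow>
        (\<exists>!w. w \<in> hom C Z (Dom C d') \<and> Comp C t' w = u \<and> Comp C d' w = v))"

definition pushout_stable :: "('o,'m,'x) addcat_scheme \<Rightarrow> 'm set \<Rightarrow> bool" where
  "pushout_stable C K \<longleftrightarrow> (\<forall>f \<in> K. \<forall>h \<in> Arr C. Dom C h = Dom C f \<longrightarrow>
     (\<exists>f' h'. is_pushout C f h f' h') \<and> (\<forall>f' h'. is_pushout C f h f' h' \<longrightarrow> f' \<in> K))"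

definition pullback_stable :: "('o,'m,'x) addcat_scheme \<Rightarrow> 'm set \<Rightarrow> bool" where
  "pullback_stable C K \<longleftrightarrow> (\<forall>d \<in> K. \<forall>t \<in> Arr C. Cod C t = Cod C d \<longrightarrow>
     (\<exists>d' t'. is_pullback C d t d' t') \<and> (\<forall>d' t'. is_pullback C d t d' t' \<longrightarrow> d' \<in> K))"

definition iso_closed :: "('o,'m,'x) addcat_scheme \<Rightarrow> 'm set \<Rightarrow> bool" where
  "iso_closed C K \<longleftrightarrow> (\<forall>f \<in> K. \<forall>a b. iso C a \<and> iso C b \<and> Cod C a = Dom C f \<and> Dom C b = Cod C f
      \<longrightarrow> Comp C b (Comp C f a) \<in> K)"

definition dsum_closed :: "('o,'m,'x) addcat_scheme \<Rightarrow> 'm set \<Rightarrow> bool" where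
  "dsum_closed C K \<longleftrightarrow> (\<forall>f \<in> K. \<forall>g \<in> K. \<forall>S i1 i2 p1 p2 T j1 j2 q1 q2.
      biprod C (Dom C f) (Dom C g) S i1 i2 p1 p2 \<and> biprod C (Cod C f) (Cod C g) T j1 j2 q1 q2
      \<longrightarrow> dsum C p1 p2 j1 j2 f g \<in> K)"

definition right_weakly_exact :: "('o,'m,'x) addcat_scheme \<Rightarrow> 'm set \<Rightarrow> bool" where
  "right_weakly_exact C I \<longleftrightarrow>
     (\<forall>f \<in> I. is_kernel C f) \<and> iso_closed C I \<and>
     (\<forall>X \<in> Obj C. Id C X \<in> I \<and> (\<forall>Z f. zero_obj C Z \<and> f \<in> hom C Z X \<longrightarrow> f \<in> I)) \<and>
     pushout_stable C I \<and>
     (\<forall>a \<in> Arr C. \<forall>b \<in> Arr C. Cod C a = Dom C b \<and> Comp C b a \<in> I \<and> has_cokernel C a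
        \<longrightarrow> a \<in> I) \<and>
     dsum_closed C I"

definition left_weakly_exact :: "('o,'m,'x) addcat_scheme \<Rightarrow> 'm set \<Rightarrow> bool" where
  "left_weakly_exact C D \<longleftrightarrow>
     (\<forall>f \<in> D. is_cokernel C f) \<and> iso_closed C D \<and>
     (\<forall>X \<in> Obj C. Id C X \<in> D \<and> (\<forall>Z f. zero_obj C Z \<and> f \<in> hom C X Z \<longrightarrow> f \<in> D)) \<and>
     pullback_stable C D \<and>
     (\<forall>a \<in> Arr C. \<forall>b \<in> Arr C. Cod C a = Dom C b \<and> Comp C b a \<in> D \<and> has_kernel C b
        \<longrightarrow> b \<in> D) \<and>
     dsum_closed C D"

definition adm_monics :: "('m \<times> 'm) set \<Rightarrow> 'm set" where
  "adm_monics W = fst ` W"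

definition adm_epics :: "('m \<times> 'm) set \<Rightarrow> 'm set" where
  "adm_epics W = snd ` W"

definition weakly_exact :: "('o,'m,'x) addcat_scheme \<Rightarrow> ('m \<times> 'm) set \<Rightarrow> bool" where
  "weakly_exact C W \<longleftrightarrow>
     (\<forall>(i,d) \<in> W. kcpair C i d) \<and>
     \<comment> \<open>closed under isomorphisms of sequences\<close>
     (\<forall>(i,d) \<in> W. \<forall>i' d' a b c. i' \<in> Arr C \<and> d' \<in> Arr C \<and> Cod C i' = Dom C d' \<and>
        iso C a \<and> iso C b \<and> iso C c \<and>
        a \<in> hom C (Dom C i) (Dom C i') \<and> b \<in> hom C (Cod C i) (Cod C i') \<and>
        c \<in> hom C (Cod C d) (Cod C d') \<and>
        Comp C b i = Comp C i' a \<and> Comp C c d = Comp C d' b \<longrightarrow> (i',d') \<in> W) \<and>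
     \<comment> \<open>closed under finite direct sums: the empty sum and binary sums\<close>
     (\<forall>Z. zero_obj C Z \<longrightarrow> (Id C Z, Id C Z) \<in> W) \<and>
     (\<forall>(i,d) \<in> W. \<forall>(i',d') \<in> W. \<forall>SA a1 a2 r1 r2 SB b1 b2 s1 s2 SC c1 c2 t1 t2.
        biprod C (Dom C i) (Dom C i') SA a1 a2 r1 r2 \<and>
        biprod C (Cod C i) (Cod C i') SB b1 b2 s1 s2 \<and>
        biprod C (Cod C d) (Cod C d') SC c1 c2 t1 t2 \<longrightarrow>
        (dsum C r1 r2 b1 b2 i i', dsum C s1 s2 c1 c2 d d') \<in> W) \<and>
     \<comment> \<open>(E0), (E0 op)\<close>
     (\<forall>X \<in> Obj C. Id C X \<in> adm_monics W) \<and>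
     (\<forall>X \<in> Obj C. Id C X \<in> adm_epics W) \<and>
     \<comment> \<open>(E2), (E2 op)\<close>
     pushout_stable C (adm_monics W) \<and>
     pullback_stable C (adm_epics W)"

end

theory Submission
  imports Defs
begin

(* Everything rests on the obscure axiom (Q) for the admissible monics. Let b a be an
   admissible monic with cokernel d, and let q be a cokernel of a. The morphism m = (q, b)
   into the biproduct of the targets of q and b is the pushout of b a along a, hence an
   admissible monic, say the kernel of e. If t is the morphism with t q = d b and phi the
   one with phi d = e j2, then e has components (- phi t, phi d), and this makes q the
   pullback of the admissible epic d along t. So q is an admissible epic, a is its kernel,
   and (a, q) lies in W because a kernel-cokernel pair with admissible epic part is
   isomorphic to a pair of W. In the opposite category the swapped pairs of W again form a weakly exact
   structure, whose admissible monics are the admissible epics of W; this gives the left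
   weakly exact structure. *)

section \<open>Preadditive categories\<close>

locale preadditive_cat =
  fixes C :: "('o,'m) addcat"
  assumes preadditive: "preadditive C"
begin

abbreviation comp (infixr "\<cdot>" 70) where "g \<cdot> f \<equiv> Comp C g f"
abbreviation add (infixl "\<oplus>" 65) where "f \<oplus> g \<equiv> Add C f g"

lemma category: "category C"
  using preadditive unfolding preadditive_def by simp

lemma hom_iff: "f \<in> hom C X Y \<longleftrightarrow> f \<in> Arr C \<and> Dom C f = X \<and> Cod C f = Y"
  unfolding hom_def by auto

lemma dom_obj [simp]: "f \<in> Arr C \<Longrightarrow> Dom C f \<in> Obj C"
  and cod_obj [simp]: "f \<in> Arr C \<Longrightarrow> Cod C f \<in> Obj C"
  using category unfolding category_def by auto

lemma id_hom: "X \<in> Obj C \<Longrightarrow> Id C X \<in> hom C X X"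
  using category unfolding category_def by simp

lemma arr_id [simp]: "X \<in> Obj C \<Longrightarrow> Id C X \<in> Arr C"
  and dom_id [simp]: "X \<in> Obj C \<Longrightarrow> Dom C (Id C X) = X"
  and cod_id [simp]: "X \<in> Obj C \<Longrightarrow> Cod C (Id C X) = X"
  using id_hom unfolding hom_iff by auto

lemma comp_hom: "f \<in> hom C X Y \<Longrightarrow> g \<in> hom C Y Z \<Longrightarrow> g \<cdot> f \<in> hom C X Z"
proof -
  assume "f \<in> hom C X Y" "g \<in> hom C Y Z"
  moreover from this have "X \<in> Obj C" "Y \<in> Obj C" "Z \<in> Obj C"
    unfolding hom_iff by auto
  ultimately show ?thesis
    using category unfolding category_def by blast
qed

lemma arr_comp [simp]: "f \<in> Arr C \<Longrightarrow> g \<in> Arr C \<Longrightarrow> Dom C g = Cod C f \<Longrightarrow> g \<cdot> f \<in> Arr C"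
  and dom_comp [simp]: "f \<in> Arr C \<Longrightarrow> g \<in> Arr C \<Longrightarrow> Dom C g = Cod C f \<Longrightarrow> Dom C (g \<cdot> f) = Dom C f"
  and cod_comp [simp]: "f \<in> Arr C \<Longrightarrow> g \<in> Arr C \<Longrightarrow> Dom C g = Cod C f \<Longrightarrow> Cod C (g \<cdot> f) = Cod C g"
  using comp_hom[of f "Dom C f" "Cod C f" g "Cod C g"] unfolding hom_iff by auto

lemma comp_id_right [simp]: "f \<in> Arr C \<Longrightarrow> X = Dom C f \<Longrightarrow> f \<cdot> Id C X = f"
  and comp_id_left [simp]: "f \<in> Arr C \<Longrightarrow> Y = Cod C f \<Longrightarrow> Id C Y \<cdot> f = f"
  using category unfolding category_def by simp_all

lemma comp_assoc [simp]:
  "f \<in> Arr C \<Longrightarrow> g \<in> Arr C \<Longrightarrow> h \<in> Arr C \<Longrightarrow> Dom C g = Cod C f \<Longrightarrow> Dom C h = Cod C g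
   \<Longrightarrow> (h \<cdot> g) \<cdot> f = h \<cdot> (g \<cdot> f)"
  using category unfolding category_def by simp

lemma hom_group:
  assumes "X \<in> Obj C" "Y \<in> Obj C"
  shows "Zero C X Y \<in> hom C X Y"
    and "f \<in> hom C X Y \<Longrightarrow> g \<in> hom C X Y \<Longrightarrow> f \<oplus> g \<in> hom C X Y"
    and "f \<in> hom C X Y \<Longrightarrow> Neg C f \<in> hom C X Y"
    and "f \<in> hom C X Y \<Longrightarrow> g \<in> hom C X Y \<Longrightarrow> h \<in> hom C X Y \<Longrightarrow> (f \<oplus> g) \<oplus> h = f \<oplus> (g \<oplus> h)"
    and "f \<in> hom C X Y \<Longrightarrow> g \<in> hom C X Y \<Longrightarrow> f \<oplus> g = g \<oplus> f"
    and "f \<in> hom C X Y \<Longrightarrow> Zero C X Y \<oplus> f = f"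
    and "f \<in> hom C X Y \<Longrightarrow> Neg C f \<oplus> f = Zero C X Y"
  using preadditive[unfolded preadditive_def, THEN conjunct2, THEN conjunct1, rule_format, OF assms]
  by blast+

lemma arr_zero [simp]: "X \<in> Obj C \<Longrightarrow> Y \<in> Obj C \<Longrightarrow> Zero C X Y \<in> Arr C"
  and dom_zero [simp]: "X \<in> Obj C \<Longrightarrow> Y \<in> Obj C \<Longrightarrow> Dom C (Zero C X Y) = X"
  and cod_zero [simp]: "X \<in> Obj C \<Longrightarrow> Y \<in> Obj C \<Longrightarrow> Cod C (Zero C X Y) = Y"
  using hom_group(1) unfolding hom_iff by auto

lemma arr_add [simp]:
    "f \<in> Arr C \<Longrightarrow> g \<in> Arr C \<Longrightarrow> Dom C g = Dom C f \<Longrightarrow> Cod C g = Cod C f \<Longrightarrow> f \<oplus> g \<in> Arr C"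
  and dom_add [simp]:
    "f \<in> Arr C \<Longrightarrow> g \<in> Arr C \<Longrightarrow> Dom C g = Dom C f \<Longrightarrow> Cod C g = Cod C f \<Longrightarrow> Dom C (f \<oplus> g) = Dom C f"
  and cod_add [simp]:
    "f \<in> Arr C \<Longrightarrow> g \<in> Arr C \<Longrightarrow> Dom C g = Dom C f \<Longrightarrow> Cod C g = Cod C f \<Longrightarrow> Cod C (f \<oplus> g) = Cod C f"
  using hom_group(2)[of "Dom C f" "Cod C f" f g] unfolding hom_iff by auto

lemma arr_neg [simp]: "f \<in> Arr C \<Longrightarrow> Neg C f \<in> Arr C"
  and dom_neg [simp]: "f \<in> Arr C \<Longrightarrow> Dom C (Neg C f) = Dom C f"
  and cod_neg [simp]: "f \<in> Arr C \<Longrightarrow> Cod C (Neg C f) = Cod C f"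
  using hom_group(3)[of "Dom C f" "Cod C f" f] unfolding hom_iff by auto

lemma add_assoc: "f \<in> Arr C \<Longrightarrow> g \<in> Arr C \<Longrightarrow> h \<in> Arr C \<Longrightarrow> Dom C g = Dom C f \<Longrightarrow> Cod C g = Cod C f
  \<Longrightarrow> Dom C h = Dom C f \<Longrightarrow> Cod C h = Cod C f \<Longrightarrow> (f \<oplus> g) \<oplus> h = f \<oplus> (g \<oplus> h)"
  using hom_group(4)[of "Dom C f" "Cod C f"] unfolding hom_iff by simp

lemma add_commute: "f \<in> Arr C \<Longrightarrow> g \<in> Arr C \<Longrightarrow> Dom C g = Dom C f \<Longrightarrow> Cod C g = Cod C f
  \<Longrightarrow> f \<oplus> g = g \<oplus> f"
  using hom_group(5)[of "Dom C f" "Cod C f"] unfolding hom_iff by simp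

lemma zero_add [simp]: "f \<in> Arr C \<Longrightarrow> X = Dom C f \<Longrightarrow> Y = Cod C f \<Longrightarrow> Zero C X Y \<oplus> f = f"
  using hom_group(6)[of "Dom C f" "Cod C f"] unfolding hom_iff by simp

lemma add_zero [simp]: "f \<in> Arr C \<Longrightarrow> X = Dom C f \<Longrightarrow> Y = Cod C f \<Longrightarrow> f \<oplus> Zero C X Y = f"
  by (simp add: add_commute[of f])

lemma neg_add [simp]: "f \<in> Arr C \<Longrightarrow> Neg C f \<oplus> f = Zero C (Dom C f) (Cod C f)"
  using hom_group(7)[of "Dom C f" "Cod C f"] unfolding hom_iff by simp

lemma add_neg [simp]: "f \<in> Arr C \<Longrightarrow> f \<oplus> Neg C f = Zero C (Dom C f) (Cod C f)"
  by (simp add: add_commute[of f])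

lemma comp_add_right: "f \<in> Arr C \<Longrightarrow> g \<in> Arr C \<Longrightarrow> h \<in> Arr C \<Longrightarrow> Dom C g = Dom C f \<Longrightarrow> Cod C g = Cod C f
  \<Longrightarrow> Dom C h = Cod C f \<Longrightarrow> h \<cdot> (f \<oplus> g) = h \<cdot> f \<oplus> h \<cdot> g"
  using preadditive[unfolded preadditive_def, THEN conjunct2, THEN conjunct2, THEN conjunct1,
      rule_format, of "Dom C f" "Cod C f" "Cod C h" f g h]
  by (simp add: hom_iff)

lemma comp_add_left: "f \<in> Arr C \<Longrightarrow> g \<in> Arr C \<Longrightarrow> h \<in> Arr C \<Longrightarrow> Dom C h = Dom C g \<Longrightarrow> Cod C h = Cod C g
  \<Longrightarrow> Dom C g = Cod C f \<Longrightarrow> (g \<oplus> h) \<cdot> f = g \<cdot> f \<oplus> h \<cdot> f"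
  using preadditive[unfolded preadditive_def, THEN conjunct2, THEN conjunct2, THEN conjunct2,
      rule_format, of "Dom C f" "Cod C f" "Cod C g" f g h]
  by (simp add: hom_iff)

lemma neg_unique:
  "x \<in> Arr C \<Longrightarrow> y \<in> Arr C \<Longrightarrow> Dom C y = Dom C x \<Longrightarrow> Cod C y = Cod C x
   \<Longrightarrow> x \<oplus> y = Zero C (Dom C x) (Cod C x) \<Longrightarrow> x = Neg C y"
proof -
  assume a: "x \<in> Arr C" "y \<in> Arr C" "Dom C y = Dom C x" "Cod C y = Cod C x"
    and e: "x \<oplus> y = Zero C (Dom C x) (Cod C x)"
  have "x = x \<oplus> (y \<oplus> Neg C y)" using a by simp
  also have "\<dots> = (x \<oplus> y) \<oplus> Neg C y" using a by (simp add: add_assoc)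
  also have "\<dots> = Neg C y" using a e by simp
  finally show ?thesis .
qed

lemma add_right_cancel:
  "x \<in> Arr C \<Longrightarrow> y \<in> Arr C \<Longrightarrow> Dom C y = Dom C x \<Longrightarrow> Cod C y = Cod C x
   \<Longrightarrow> x \<oplus> y = z \<Longrightarrow> x = z \<oplus> Neg C y"
proof -
  assume a: "x \<in> Arr C" "y \<in> Arr C" "Dom C y = Dom C x" "Cod C y = Cod C x" and e: "x \<oplus> y = z"
  have "x = x \<oplus> (y \<oplus> Neg C y)" using a by simp
  also have "\<dots> = (x \<oplus> y) \<oplus> Neg C y" using a by (intro add_assoc[symmetric]) simp_all
  finally show ?thesis using e by simp
qed

lemma add_idem_zero: "x \<in> Arr C \<Longrightarrow> x \<oplus> x = x \<Longrightarrow> x = Zero C (Dom C x) (Cod C x)"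
proof -
  assume "x \<in> Arr C" "x \<oplus> x = x"
  then have "x = x \<oplus> Neg C x" by (intro add_right_cancel) simp_all
  with \<open>x \<in> Arr C\<close> show ?thesis by simp
qed

lemma comp_zero_right [simp]:
  "g \<in> Arr C \<Longrightarrow> X \<in> Obj C \<Longrightarrow> Y = Dom C g \<Longrightarrow> g \<cdot> Zero C X Y = Zero C X (Cod C g)"
proof -
  assume a: "g \<in> Arr C" "X \<in> Obj C" "Y = Dom C g"
  have "g \<cdot> Zero C X Y \<oplus> g \<cdot> Zero C X Y = g \<cdot> (Zero C X Y \<oplus> Zero C X Y)"
    using a by (intro comp_add_right[symmetric]) simp_all
  also have "\<dots> = g \<cdot> Zero C X Y" using a by simp
  finally show ?thesis using a add_idem_zero[of "g \<cdot> Zero C X Y"] by simp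
qed

lemma comp_zero_left [simp]:
  "f \<in> Arr C \<Longrightarrow> Z \<in> Obj C \<Longrightarrow> Y = Cod C f \<Longrightarrow> Zero C Y Z \<cdot> f = Zero C (Dom C f) Z"
proof -
  assume a: "f \<in> Arr C" "Z \<in> Obj C" "Y = Cod C f"
  have "Zero C Y Z \<cdot> f \<oplus> Zero C Y Z \<cdot> f = (Zero C Y Z \<oplus> Zero C Y Z) \<cdot> f"
    using a by (intro comp_add_left[symmetric]) simp_all
  also have "\<dots> = Zero C Y Z \<cdot> f" using a by simp
  finally show ?thesis using a add_idem_zero[of "Zero C Y Z \<cdot> f"] by simp
qed

lemma comp_neg_left: "f \<in> Arr C \<Longrightarrow> g \<in> Arr C \<Longrightarrow> Dom C g = Cod C f \<Longrightarrow> Neg C g \<cdot> f = Neg C (g \<cdot> f)"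
proof -
  assume a: "f \<in> Arr C" "g \<in> Arr C" "Dom C g = Cod C f"
  have "Neg C g \<cdot> f \<oplus> g \<cdot> f = (Neg C g \<oplus> g) \<cdot> f"
    using a by (intro comp_add_left[symmetric]) simp_all
  also have "\<dots> = Zero C (Dom C f) (Cod C g)" using a by simp
  finally show ?thesis using a by (intro neg_unique) simp_all
qed

lemma zero_obj_to:
  assumes Z: "zero_obj C Z" and u: "u \<in> Arr C" "Cod C u = Z"
  shows "u = Zero C (Dom C u) Z"
proof -
  have "u = Id C Z \<cdot> u" using u by simp
  also have "\<dots> = Zero C Z Z \<cdot> u" using Z unfolding zero_obj_def by simp
  also have "\<dots> = Zero C (Dom C u) Z" using Z u unfolding zero_obj_def by simp
  finally show ?thesis .
qed

lemma zero_obj_from: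
  assumes Z: "zero_obj C Z" and u: "u \<in> Arr C" "Dom C u = Z"
  shows "u = Zero C Z (Cod C u)"
proof -
  have "u = u \<cdot> Id C Z" using u by simp
  also have "\<dots> = u \<cdot> Zero C Z Z" using Z unfolding zero_obj_def by simp
  also have "\<dots> = Zero C Z (Cod C u)" using Z u unfolding zero_obj_def by simp
  finally show ?thesis .
qed

lemma isoI: "f \<in> Arr C \<Longrightarrow> g \<in> Arr C \<Longrightarrow> Dom C g = Cod C f \<Longrightarrow> Cod C g = Dom C f
  \<Longrightarrow> g \<cdot> f = Id C (Dom C f) \<Longrightarrow> f \<cdot> g = Id C (Cod C f) \<Longrightarrow> iso C f"
  unfolding iso_def hom_def by blast

lemma isoE:
  assumes "iso C f"
  obtains g where "g \<in> Arr C" "Dom C g = Cod C f" "Cod C g = Dom C f"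
    "g \<cdot> f = Id C (Dom C f)" "f \<cdot> g = Id C (Cod C f)" "iso C g"
proof -
  from assms obtain g where g: "g \<in> Arr C" "Dom C g = Cod C f" "Cod C g = Dom C f"
    "g \<cdot> f = Id C (Dom C f)" "f \<cdot> g = Id C (Cod C f)"
    unfolding iso_def hom_def by blast
  moreover have "iso C g" using g assms[unfolded iso_def] by (intro isoI[of g f]) simp_all
  ultimately show thesis by (rule that)
qed

lemma iso_id: "X \<in> Obj C \<Longrightarrow> iso C (Id C X)"
  by (rule isoI[of _ "Id C X"]) simp_all

section \<open>Kernels, cokernels and biproducts\<close>

lemma kernel_ofD:
  "is_kernel_of C i d \<Longrightarrow> i \<in> Arr C \<and> d \<in> Arr C \<and> Cod C i = Dom C d \<and>
     d \<cdot> i = Zero C (Dom C i) (Cod C d)"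
  unfolding is_kernel_of_def by auto

lemma kernel_factor:
  assumes "is_kernel_of C i d" "g \<in> Arr C" "Cod C g = Dom C d"
    "d \<cdot> g = Zero C (Dom C g) (Cod C d)"
  obtains u where "u \<in> Arr C" "Dom C u = Dom C g" "Cod C u = Dom C i" "i \<cdot> u = g"
proof -
  have "\<exists>!u. u \<in> hom C (Dom C g) (Dom C i) \<and> i \<cdot> u = g"
    using assms unfolding is_kernel_of_def by (simp add: hom_iff)
  then show thesis using that unfolding hom_iff by blast
qed

lemma kernel_cancel:
  assumes k: "is_kernel_of C i d" and u: "u \<in> Arr C" "u' \<in> Arr C" "Cod C u = Dom C i"
    "Cod C u' = Dom C i" "Dom C u' = Dom C u" and e: "i \<cdot> u = i \<cdot> u'"
  shows "u = u'"
proof -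
  note i = kernel_ofD[OF k]
  have "d \<cdot> (i \<cdot> u) = Zero C (Dom C u) (Cod C d)"
    using u i by (simp flip: comp_assoc)
  then have "\<exists>!v. v \<in> hom C (Dom C u) (Dom C i) \<and> i \<cdot> v = i \<cdot> u"
    using k u i unfolding is_kernel_of_def by (simp add: hom_iff)
  then show ?thesis using u e by (auto simp: hom_iff)
qed

lemma is_kernel_ofI:
  assumes "i \<in> Arr C" "d \<in> Arr C" "Cod C i = Dom C d" "d \<cdot> i = Zero C (Dom C i) (Cod C d)"
    and factor: "\<And>g. g \<in> Arr C \<Longrightarrow> Cod C g = Dom C d \<Longrightarrow> d \<cdot> g = Zero C (Dom C g) (Cod C d) \<Longrightarrow>
      \<exists>u \<in> Arr C. Dom C u = Dom C g \<and> Cod C u = Dom C i \<and> i \<cdot> u = g"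
    and cancel: "\<And>u u'. u \<in> Arr C \<Longrightarrow> u' \<in> Arr C \<Longrightarrow> Cod C u = Dom C i \<Longrightarrow> Cod C u' = Dom C i \<Longrightarrow>
      Dom C u' = Dom C u \<Longrightarrow> i \<cdot> u = i \<cdot> u' \<Longrightarrow> u = u'"
  shows "is_kernel_of C i d"
  unfolding is_kernel_of_def
proof (intro conjI ballI impI)
  fix X g assume "X \<in> Obj C" "g \<in> hom C X (Dom C d)" "d \<cdot> g = Zero C X (Cod C d)"
  then obtain u where u: "u \<in> Arr C" "Dom C u = X" "Cod C u = Dom C i" "i \<cdot> u = g"
    using factor unfolding hom_iff by blast
  show "\<exists>!u. u \<in> hom C X (Dom C i) \<and> i \<cdot> u = g"
  proof (rule ex1I[of _ u])
    fix u' assume "u' \<in> hom C X (Dom C i) \<and> i \<cdot> u' = g"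
    then show "u' = u" using u cancel[of u' u] unfolding hom_iff by simp
  qed (use u in \<open>simp add: hom_iff\<close>)
qed (use assms in simp_all)

lemma cokernel_ofD:
  "is_cokernel_of C d i \<Longrightarrow> i \<in> Arr C \<and> d \<in> Arr C \<and> Cod C i = Dom C d \<and>
     d \<cdot> i = Zero C (Dom C i) (Cod C d)"
  unfolding is_cokernel_of_def by auto

lemma cokernel_factor:
  assumes "is_cokernel_of C d i" "g \<in> Arr C" "Dom C g = Cod C i"
    "g \<cdot> i = Zero C (Dom C i) (Cod C g)"
  obtains u where "u \<in> Arr C" "Dom C u = Cod C d" "Cod C u = Cod C g" "u \<cdot> d = g"
proof -
  have "\<exists>!u. u \<in> hom C (Cod C d) (Cod C g) \<and> u \<cdot> d = g"
    using assms unfolding is_cokernel_of_def by (simp add: hom_iff)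
  then show thesis using that unfolding hom_iff by blast
qed

lemma cokernel_cancel:
  assumes k: "is_cokernel_of C d i" and u: "u \<in> Arr C" "u' \<in> Arr C" "Dom C u = Cod C d"
    "Dom C u' = Cod C d" "Cod C u' = Cod C u" and e: "u \<cdot> d = u' \<cdot> d"
  shows "u = u'"
proof -
  note d = cokernel_ofD[OF k]
  have "(u \<cdot> d) \<cdot> i = Zero C (Dom C i) (Cod C u)"
    using u d by simp
  then have "\<exists>!v. v \<in> hom C (Cod C d) (Cod C u) \<and> v \<cdot> d = u \<cdot> d"
    using k u d unfolding is_cokernel_of_def by (simp add: hom_iff)
  then show ?thesis using u e by (auto simp: hom_iff)
qed

lemma kernels_iso:
  assumes i: "is_kernel_of C i d" and k: "is_kernel_of C k d"
  obtains \<beta> where "iso C \<beta>" "\<beta> \<in> hom C (Dom C k) (Dom C i)" "i \<cdot> \<beta> = k"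
proof -
  note ia = kernel_ofD[OF i] and ka = kernel_ofD[OF k]
  obtain \<alpha> where \<alpha>: "\<alpha> \<in> Arr C" "Dom C \<alpha> = Dom C i" "Cod C \<alpha> = Dom C k" "k \<cdot> \<alpha> = i"
    using kernel_factor[OF k, of i] ia by auto
  obtain \<beta> where \<beta>: "\<beta> \<in> Arr C" "Dom C \<beta> = Dom C k" "Cod C \<beta> = Dom C i" "i \<cdot> \<beta> = k"
    using kernel_factor[OF i, of k] ka by auto
  have "\<beta> \<cdot> \<alpha> = Id C (Dom C i)"
    by (rule kernel_cancel[OF i]) (use \<alpha> \<beta> ia in \<open>simp_all flip: comp_assoc\<close>)
  moreover have "\<alpha> \<cdot> \<beta> = Id C (Dom C k)"
    by (rule kernel_cancel[OF k]) (use \<alpha> \<beta> ka in \<open>simp_all flip: comp_assoc\<close>)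
  ultimately have "iso C \<beta>" using \<alpha> \<beta> by (intro isoI[of _ \<alpha>]) simp_all
  with \<beta> show thesis by (intro that) (simp_all add: hom_iff)
qed

lemma kcpair_from_zero_obj:
  assumes Z: "zero_obj C Z" and f: "f \<in> Arr C" "Dom C f = Z"
  shows "kcpair C f (Id C (Cod C f))"
proof -
  have ZX: "Z \<in> Obj C" "Cod C f \<in> Obj C" using f by auto
  have id_f: "Id C (Cod C f) \<cdot> f = Zero C (Dom C f) (Cod C (Id C (Cod C f)))"
  proof -
    have "Id C (Cod C f) \<cdot> f = f" using f by simp
    also have "\<dots> = Zero C (Dom C f) (Cod C (Id C (Cod C f)))"
      unfolding cod_id[OF ZX(2)] f(2) by (rule zero_obj_from[OF Z f])
    finally show ?thesis .
  qed
  have "is_kernel_of C f (Id C (Cod C f))"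
  proof (rule is_kernel_ofI)
    fix g assume g: "g \<in> Arr C" "Cod C g = Dom C (Id C (Cod C f))"
      "Id C (Cod C f) \<cdot> g = Zero C (Dom C g) (Cod C (Id C (Cod C f)))"
    have "f \<cdot> Zero C (Dom C g) Z = Zero C (Dom C g) (Cod C f)" using f g(1) ZX by simp
    also have "\<dots> = Id C (Cod C f) \<cdot> g" using g(3) ZX by simp
    also have "\<dots> = g" using g(1,2) ZX by simp
    finally have "f \<cdot> Zero C (Dom C g) Z = g" .
    moreover have "Zero C (Dom C g) Z \<in> Arr C" "Dom C (Zero C (Dom C g) Z) = Dom C g"
      "Cod C (Zero C (Dom C g) Z) = Dom C f"
      using g(1) ZX f by simp_all
    ultimately show "\<exists>u \<in> Arr C. Dom C u = Dom C g \<and> Cod C u = Dom C f \<and> f \<cdot> u = g"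
      by blast
  next
    fix u u' assume u: "u \<in> Arr C" "u' \<in> Arr C" "Cod C u = Dom C f" "Cod C u' = Dom C f"
      "Dom C u' = Dom C u"
    have "u = Zero C (Dom C u) Z" "u' = Zero C (Dom C u') Z"
      by (rule zero_obj_to[OF Z]; use u f in simp)+
    with u(5) show "u = u'" by argo
  qed (fact id_f | use f ZX in simp)+
  moreover have "is_cokernel_of C (Id C (Cod C f)) f"
    unfolding is_cokernel_of_def
  proof (intro conjI ballI impI)
    fix Y g assume g: "g \<in> hom C (Cod C f) Y"
    show "\<exists>!u. u \<in> hom C (Cod C (Id C (Cod C f))) Y \<and> u \<cdot> Id C (Cod C f) = g"
    proof (rule ex1I[of _ g])
      fix u assume "u \<in> hom C (Cod C (Id C (Cod C f))) Y \<and> u \<cdot> Id C (Cod C f) = g"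
      then show "u = g" using ZX unfolding hom_iff by (elim conjE) simp
    qed (use g ZX in \<open>simp add: hom_iff\<close>)
  qed (fact id_f | use f ZX in simp)+
  ultimately show ?thesis unfolding kcpair_def ..
qed

lemma biprodD:
  assumes "biprod C A B S i1 i2 p1 p2"
  shows "S \<in> Obj C" "A \<in> Obj C" "B \<in> Obj C" "i1 \<in> Arr C" "i2 \<in> Arr C" "p1 \<in> Arr C" "p2 \<in> Arr C"
    "Dom C i1 = A" "Cod C i1 = S" "Dom C i2 = B" "Cod C i2 = S"
    "Dom C p1 = S" "Cod C p1 = A" "Dom C p2 = S" "Cod C p2 = B"
    "p1 \<cdot> i1 = Id C A" "p2 \<cdot> i2 = Id C B" "p2 \<cdot> i1 = Zero C A B" "p1 \<cdot> i2 = Zero C B A"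
    "i1 \<cdot> p1 \<oplus> i2 \<cdot> p2 = Id C S"
  using assms unfolding biprod_def hom_iff by (auto dest: dom_obj)

lemma biprod_eq_out:
  assumes biprod_parts: "biprod C A B S i1 i2 p1 p2" and x: "x \<in> Arr C" "Dom C x = S"
    and y: "y \<in> Arr C" "Dom C y = S" "Cod C y = Cod C x"
    and e: "x \<cdot> i1 = y \<cdot> i1" "x \<cdot> i2 = y \<cdot> i2"
  shows "x = y"
proof -
  note b = biprodD[OF biprod_parts]
  have "x = x \<cdot> (i1 \<cdot> p1 \<oplus> i2 \<cdot> p2)" using x b by simp
  also have "\<dots> = (x \<cdot> i1) \<cdot> p1 \<oplus> (x \<cdot> i2) \<cdot> p2" using x b by (subst comp_add_right) simp_all
  also have "\<dots> = (y \<cdot> i1) \<cdot> p1 \<oplus> (y \<cdot> i2) \<cdot> p2" by (simp only: e)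
  also have "\<dots> = y \<cdot> (i1 \<cdot> p1 \<oplus> i2 \<cdot> p2)" using y b by (subst comp_add_right) simp_all
  also have "\<dots> = y" using y b by simp
  finally show ?thesis .
qed

lemma biprod_tuple:
  assumes biprod_parts: "biprod C A B S i1 i2 p1 p2"
    and u: "u \<in> Arr C" "Cod C u = A" and v: "v \<in> Arr C" "Cod C v = B" "Dom C v = Dom C u"
  shows "i1 \<cdot> u \<oplus> i2 \<cdot> v \<in> Arr C" "Dom C (i1 \<cdot> u \<oplus> i2 \<cdot> v) = Dom C u"
    "Cod C (i1 \<cdot> u \<oplus> i2 \<cdot> v) = S"
    "p1 \<cdot> (i1 \<cdot> u \<oplus> i2 \<cdot> v) = u" "p2 \<cdot> (i1 \<cdot> u \<oplus> i2 \<cdot> v) = v"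
proof -
  note b = biprodD[OF biprod_parts]
  show "i1 \<cdot> u \<oplus> i2 \<cdot> v \<in> Arr C" "Dom C (i1 \<cdot> u \<oplus> i2 \<cdot> v) = Dom C u"
    "Cod C (i1 \<cdot> u \<oplus> i2 \<cdot> v) = S"
    using u v b by simp_all
  show "p1 \<cdot> (i1 \<cdot> u \<oplus> i2 \<cdot> v) = u" "p2 \<cdot> (i1 \<cdot> u \<oplus> i2 \<cdot> v) = v"
    using u v b by (subst comp_add_right; simp_all flip: comp_assoc)+
qed

lemma biprod_cotuple:
  assumes biprod_parts: "biprod C A B S i1 i2 p1 p2"
    and u: "u \<in> Arr C" "Dom C u = A" and v: "v \<in> Arr C" "Dom C v = B" "Cod C v = Cod C u"
  shows "u \<cdot> p1 \<oplus> v \<cdot> p2 \<in> Arr C" "Dom C (u \<cdot> p1 \<oplus> v \<cdot> p2) = S"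
    "Cod C (u \<cdot> p1 \<oplus> v \<cdot> p2) = Cod C u"
    "(u \<cdot> p1 \<oplus> v \<cdot> p2) \<cdot> i1 = u" "(u \<cdot> p1 \<oplus> v \<cdot> p2) \<cdot> i2 = v"
proof -
  note b = biprodD[OF biprod_parts]
  show "u \<cdot> p1 \<oplus> v \<cdot> p2 \<in> Arr C" "Dom C (u \<cdot> p1 \<oplus> v \<cdot> p2) = S"
    "Cod C (u \<cdot> p1 \<oplus> v \<cdot> p2) = Cod C u"
    using u v b by simp_all
  show "(u \<cdot> p1 \<oplus> v \<cdot> p2) \<cdot> i1 = u" "(u \<cdot> p1 \<oplus> v \<cdot> p2) \<cdot> i2 = v"
    using u v b by (subst comp_add_left; simp_all)+
qed

end

locale additive_cat =
  fixes C :: "('o,'m) addcat"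
  assumes additive: "additive_category C"

sublocale additive_cat \<subseteq> preadditive_cat
  using additive unfolding additive_category_def by unfold_locales simp

context additive_cat
begin

lemma biprod_exists:
  assumes "A \<in> Obj C" "B \<in> Obj C"
  obtains S i1 i2 p1 p2 where "biprod C A B S i1 i2 p1 p2"
  using additive assms unfolding additive_category_def by blast

end

section \<open>The obscure axiom\<close>

locale cokernel_pairing = additive_cat C for C :: "('o,'m) addcat" +
  fixes a b q S j1 j2 p1 p2 m
  assumes arr_a: "a \<in> Arr C" and arr_b: "b \<in> Arr C" and composable: "Cod C a = Dom C b"
    and cokernel: "is_cokernel_of C q a"
    and biprod: "biprod C (Cod C q) (Cod C b) S j1 j2 p1 p2"
    and pairing_def: "m = j1 \<cdot> q \<oplus> j2 \<cdot> b"
begin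

lemma arr_q: "q \<in> Arr C" "Dom C q = Cod C a" "q \<cdot> a = Zero C (Dom C a) (Cod C q)"
  using cokernel_ofD[OF cokernel] by auto

lemmas biprod_parts = biprodD[OF biprod]

lemma pairing:
  "m \<in> Arr C" "Dom C m = Dom C b" "Cod C m = S" "p1 \<cdot> m = q" "p2 \<cdot> m = b"
  using biprod_tuple[OF biprod arr_q(1) refl arr_b refl] arr_q composable
  unfolding pairing_def by simp_all

lemma pairing_comp: "m \<cdot> a = j2 \<cdot> (b \<cdot> a)"
  unfolding pairing_def using arr_a arr_b composable arr_q biprod_parts by (subst comp_add_left) simp_all

lemma pushout_pairing: "is_pushout C (b \<cdot> a) a m j2"
  unfolding is_pushout_def
proof (intro conjI ballI impI)
  fix Z u v assume "Z \<in> Obj C" and u: "u \<in> hom C (Cod C (b \<cdot> a)) Z" and v: "v \<in> hom C (Cod C a) Z"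
    and uv: "u \<cdot> (b \<cdot> a) = v \<cdot> a"
  have u: "u \<in> Arr C" "Dom C u = Cod C b" "Cod C u = Z"
    using u arr_a arr_b composable by (auto simp: hom_iff)
  have v: "v \<in> Arr C" "Dom C v = Cod C a" "Cod C v = Z" using v by (auto simp: hom_iff)
  note ab = arr_a arr_b composable
  define g where "g = v \<oplus> Neg C (u \<cdot> b)"
  have g: "g \<in> Arr C" "Dom C g = Cod C a" "Cod C g = Z" unfolding g_def using u v ab by simp_all
  have "g \<cdot> a = v \<cdot> a \<oplus> Neg C (u \<cdot> b) \<cdot> a"
    unfolding g_def using u v ab by (subst comp_add_left) simp_all
  also have "\<dots> = Zero C (Dom C a) (Cod C g)"
    using uv u v ab g by (simp add: comp_neg_left)
  finally obtain r where r: "r \<in> Arr C" "Dom C r = Cod C q" "Cod C r = Z" "r \<cdot> q = g"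
    using cokernel_factor[OF cokernel g(1)] g by auto
  define w where "w = r \<cdot> p1 \<oplus> u \<cdot> p2"
  note w = biprod_cotuple[OF biprod r(1,2) u(1,2), unfolded r(3) u(3), OF refl, folded w_def]
  have comp_m: "x \<cdot> m = (x \<cdot> j1) \<cdot> q \<oplus> (x \<cdot> j2) \<cdot> b" if "x \<in> Arr C" "Dom C x = S" for x
    unfolding pairing_def using that biprod_parts arr_q ab
    by (subst comp_add_right) (simp_all flip: comp_assoc)
  have "w \<cdot> m = g \<oplus> u \<cdot> b" using comp_m w r by simp
  also have "\<dots> = v" unfolding g_def using u v ab by (simp add: add_assoc)
  finally have wm: "w \<cdot> m = v" .
  show "\<exists>!w. w \<in> hom C (Cod C m) Z \<and> w \<cdot> j2 = u \<and> w \<cdot> m = v"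
  proof (rule ex1I[of _ w])
    show "w \<in> hom C (Cod C m) Z \<and> w \<cdot> j2 = u \<and> w \<cdot> m = v"
      using w wm pairing by (simp add: hom_iff)
  next
    fix w' assume "w' \<in> hom C (Cod C m) Z \<and> w' \<cdot> j2 = u \<and> w' \<cdot> m = v"
    then have w': "w' \<in> Arr C" "Dom C w' = S" "Cod C w' = Z" "w' \<cdot> j2 = u" "w' \<cdot> m = v"
      using pairing by (auto simp: hom_iff)
    have "(w' \<cdot> j1) \<cdot> q \<oplus> u \<cdot> b = v" using comp_m[OF w'(1,2)] w'(4,5) by simp
    then have "(w' \<cdot> j1) \<cdot> q = v \<oplus> Neg C (u \<cdot> b)"
      by (rule add_right_cancel[rotated -1]) (use w' u biprod_parts arr_q ab in simp_all)
    then have "(w' \<cdot> j1) \<cdot> q = r \<cdot> q" using r(4) unfolding g_def by simp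
    then have w'_j1: "w' \<cdot> j1 = r"
      by (rule cokernel_cancel[OF cokernel, rotated -1]) (use w' biprod_parts arr_q r in simp_all)
    show "w' = w"
      by (rule biprod_eq_out[OF biprod]) (use w w' w'_j1 in simp_all)
  qed
qed (use arr_a arr_b composable pairing biprod_parts pairing_comp in simp_all)

context
  fixes d t e
  assumes d: "is_cokernel_of C d (b \<cdot> a)"
    and t: "t \<in> Arr C" "Dom C t = Cod C q" "Cod C t = Cod C d" "t \<cdot> q = d \<cdot> b"
    and e: "is_kernel_of C m e"
begin

lemma arr_d: "d \<in> Arr C" "Dom C d = Cod C b" "d \<cdot> (b \<cdot> a) = Zero C (Dom C a) (Cod C d)"
  using cokernel_ofD[OF d] arr_a arr_b composable by auto

lemma arr_e: "e \<in> Arr C" "Dom C e = S" "e \<cdot> m = Zero C (Dom C b) (Cod C e)"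
  using kernel_ofD[OF e] pairing by auto

lemma kernel_pairing_components:
  obtains \<phi> where "\<phi> \<in> Arr C" "Dom C \<phi> = Cod C d" "Cod C \<phi> = Cod C e"
    "e \<cdot> j2 = \<phi> \<cdot> d" "e \<cdot> j1 = Neg C (\<phi> \<cdot> t)"
proof -
  note ab = arr_a arr_b composable
  have "(e \<cdot> j2) \<cdot> (b \<cdot> a) = e \<cdot> (m \<cdot> a)" using pairing_comp arr_e biprod_parts ab by simp
  also have "\<dots> = Zero C (Dom C (b \<cdot> a)) (Cod C (e \<cdot> j2))"
    using arr_e pairing ab biprod_parts by (simp flip: comp_assoc)
  finally obtain \<phi> where \<phi>: "\<phi> \<in> Arr C" "Dom C \<phi> = Cod C d" "Cod C \<phi> = Cod C e" "\<phi> \<cdot> d = e \<cdot> j2"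
    using cokernel_factor[OF d, of "e \<cdot> j2"] arr_e biprod_parts ab by auto
  have "(e \<cdot> j1) \<cdot> q \<oplus> (\<phi> \<cdot> t) \<cdot> q = e \<cdot> m"
  proof -
    have "(\<phi> \<cdot> t) \<cdot> q = (e \<cdot> j2) \<cdot> b" using \<phi> t arr_d arr_q ab by (simp flip: \<phi>(4))
    then show ?thesis
      unfolding pairing_def using arr_e biprod_parts arr_q ab by (subst comp_add_right) simp_all
  qed
  also have "\<dots> = Zero C (Dom C ((e \<cdot> j1) \<cdot> q)) (Cod C ((e \<cdot> j1) \<cdot> q))"
    using arr_e pairing biprod_parts arr_q ab by simp
  finally have "(e \<cdot> j1) \<cdot> q = Neg C ((\<phi> \<cdot> t) \<cdot> q)"
    by (rule neg_unique[rotated -1]) (use arr_e biprod_parts arr_q \<phi> t(1-3) in simp_all)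
  also have "\<dots> = Neg C (\<phi> \<cdot> t) \<cdot> q" using \<phi> t arr_q by (simp add: comp_neg_left)
  finally have "e \<cdot> j1 = Neg C (\<phi> \<cdot> t)"
    by (rule cokernel_cancel[OF cokernel, rotated -1]) (use arr_e biprod_parts arr_q \<phi> t in simp_all)
  with \<phi>(1-3) \<phi>(4)[symmetric] show thesis by (rule that)
qed

lemma pullback_pairing: "is_pullback C d t q b"
  unfolding is_pullback_def
proof (intro conjI ballI impI)
  fix Z u v assume "Z \<in> Obj C" and u: "u \<in> hom C Z (Dom C d)" and v: "v \<in> hom C Z (Dom C t)"
    and uv: "d \<cdot> u = t \<cdot> v"
  have u: "u \<in> Arr C" "Dom C u = Z" "Cod C u = Cod C b" using u arr_d by (auto simp: hom_iff)
  have v: "v \<in> Arr C" "Dom C v = Z" "Cod C v = Cod C q" using v t by (auto simp: hom_iff)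
  obtain \<phi> where \<phi>: "\<phi> \<in> Arr C" "Dom C \<phi> = Cod C d" "Cod C \<phi> = Cod C e"
    "e \<cdot> j2 = \<phi> \<cdot> d" "e \<cdot> j1 = Neg C (\<phi> \<cdot> t)"
    by (rule kernel_pairing_components)
  define x where "x = j1 \<cdot> v \<oplus> j2 \<cdot> u"
  note x = biprod_tuple[OF biprod v(1,3) u(1,3), unfolded u(2) v(2), OF refl, folded x_def]
  have "e \<cdot> x = (e \<cdot> j1) \<cdot> v \<oplus> (e \<cdot> j2) \<cdot> u"
    unfolding x_def using arr_e biprod_parts u v by (subst comp_add_right) (simp_all flip: comp_assoc)
  also have "\<dots> = Neg C (\<phi> \<cdot> (t \<cdot> v)) \<oplus> \<phi> \<cdot> (t \<cdot> v)"
    unfolding \<phi>(4,5) using \<phi> t u v arr_d uv by (simp add: comp_neg_left)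
  also have "\<dots> = Zero C (Dom C x) (Cod C e)" using \<phi> t v x by simp
  finally obtain w where w: "w \<in> Arr C" "Dom C w = Z" "Cod C w = Dom C m" "m \<cdot> w = x"
    using kernel_factor[OF e x(1)] x arr_e by auto
  have "q \<cdot> w = p1 \<cdot> x" "b \<cdot> w = p2 \<cdot> x"
    using w pairing biprod_parts by (simp_all flip: w(4) comp_assoc)
  with x have "q \<cdot> w = v" "b \<cdot> w = u" by simp_all
  show "\<exists>!w. w \<in> hom C Z (Dom C q) \<and> b \<cdot> w = u \<and> q \<cdot> w = v"
  proof (rule ex1I[of _ w])
    show "w \<in> hom C Z (Dom C q) \<and> b \<cdot> w = u \<and> q \<cdot> w = v"
      using w \<open>q \<cdot> w = v\<close> \<open>b \<cdot> w = u\<close> pairing arr_q composable by (simp add: hom_iff)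
  next
    fix w' assume "w' \<in> hom C Z (Dom C q) \<and> b \<cdot> w' = u \<and> q \<cdot> w' = v"
    then have w': "w' \<in> Arr C" "Dom C w' = Z" "Cod C w' = Cod C a" "b \<cdot> w' = u" "q \<cdot> w' = v"
      using arr_q by (auto simp: hom_iff)
    have "m \<cdot> w' = x"
      unfolding pairing_def x_def using w' biprod_parts arr_q arr_b composable
      by (subst comp_add_left) simp_all
    with w(4) have "m \<cdot> w' = m \<cdot> w" by simp
    then show "w' = w"
      by (rule kernel_cancel[OF e, rotated -1]) (use w w' pairing composable in simp_all)
  qed
qed (use arr_d t arr_q arr_b composable in simp_all)

lemma kernel_of_pairing_cokernel:
  assumes ba: "is_kernel_of C (b \<cdot> a) d"
  shows "is_kernel_of C a q"
proof (rule is_kernel_ofI)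
  note ab = arr_a arr_b composable
  fix g assume g: "g \<in> Arr C" "Cod C g = Dom C q" "q \<cdot> g = Zero C (Dom C g) (Cod C q)"
  have "d \<cdot> (b \<cdot> g) = t \<cdot> (q \<cdot> g)"
    using arr_d(1,2) ab g(1,2) arr_q(1,2) t(1-3) by (simp flip: t(4) comp_assoc)
  also have "\<dots> = Zero C (Dom C (b \<cdot> g)) (Cod C d)" using g t arr_q ab by simp
  finally obtain u where u: "u \<in> Arr C" "Dom C u = Dom C g" "Cod C u = Dom C a"
    "(b \<cdot> a) \<cdot> u = b \<cdot> g"
    using kernel_factor[OF ba, of "b \<cdot> g"] g ab arr_q arr_d by auto
  have "m \<cdot> (a \<cdot> u) = (m \<cdot> a) \<cdot> u" using pairing(1,2) u(1,3) ab by simp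
  also have "\<dots> = j2 \<cdot> ((b \<cdot> a) \<cdot> u)" unfolding pairing_comp using biprod_parts u(1,3) ab by simp
  also have "\<dots> = j2 \<cdot> (b \<cdot> g)" by (simp only: u(4))
  also have "\<dots> = m \<cdot> g"
    unfolding pairing_def using g biprod_parts arr_q ab by (subst comp_add_left) simp_all
  finally have "a \<cdot> u = g"
    by (rule kernel_cancel[OF e, rotated -1]) (use u g pairing ab arr_q in simp_all)
  with u show "\<exists>u \<in> Arr C. Dom C u = Dom C g \<and> Cod C u = Dom C a \<and> a \<cdot> u = g" by blast
next
  fix u u' assume u: "u \<in> Arr C" "u' \<in> Arr C" "Cod C u = Dom C a" "Cod C u' = Dom C a"
    "Dom C u' = Dom C u" "a \<cdot> u = a \<cdot> u'"
  then have "(b \<cdot> a) \<cdot> u = (b \<cdot> a) \<cdot> u'" using arr_a arr_b composable by simp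
  then show "u = u'"
    by (rule kernel_cancel[OF ba, rotated -1]) (use u arr_a arr_b composable in simp_all)
qed (use arr_a arr_q in simp_all)

end

end

section \<open>Opposite categories\<close>

definition opposite :: "('o,'m) addcat \<Rightarrow> ('o,'m) addcat" where
  "opposite C = \<lparr>Obj = Obj C, Arr = Arr C, Dom = Cod C, Cod = Dom C, Id = Id C,
     Comp = (\<lambda>g f. Comp C f g), Add = Add C, Zero = (\<lambda>X Y. Zero C Y X), Neg = Neg C\<rparr>"

lemma opposite_simps [simp]:
  "Obj (opposite C) = Obj C" "Arr (opposite C) = Arr C" "Dom (opposite C) = Cod C"
  "Cod (opposite C) = Dom C" "Id (opposite C) = Id C" "Comp (opposite C) g f = Comp C f g"
  "Add (opposite C) = Add C" "Zero (opposite C) X Y = Zero C Y X" "Neg (opposite C) = Neg C"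
  by (simp_all add: opposite_def)

lemma hom_opposite [simp]: "hom (opposite C) X Y = hom C Y X"
  by (auto simp: hom_def)

lemma zero_obj_opposite [simp]: "zero_obj (opposite C) Z = zero_obj C Z"
  by (simp add: zero_obj_def)

lemma iso_opposite [simp]: "iso (opposite C) f = iso C f"
  unfolding iso_def by auto

lemma biprod_opposite: "biprod (opposite C) A B S i1 i2 p1 p2 = biprod C A B S p1 p2 i1 i2"
  unfolding biprod_def by auto

lemma kernel_of_opposite [simp]: "is_kernel_of (opposite C) i d = is_cokernel_of C i d"
  and cokernel_of_opposite [simp]: "is_cokernel_of (opposite C) d i = is_kernel_of C d i"
  unfolding is_kernel_of_def is_cokernel_of_def by auto

lemma kcpair_opposite: "kcpair (opposite C) i d = kcpair C d i"
  unfolding kcpair_def by auto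

lemma is_kernel_opposite: "is_kernel (opposite C) f = is_cokernel C f"
  and has_cokernel_opposite: "has_cokernel (opposite C) f = has_kernel C f"
  unfolding is_kernel_def is_cokernel_def has_kernel_def has_cokernel_def by auto

lemma pushout_opposite: "is_pushout (opposite C) f h f' h' = is_pullback C f h f' h'"
  and pullback_opposite: "is_pullback (opposite C) f h f' h' = is_pushout C f h f' h'"
  unfolding is_pushout_def is_pullback_def by auto

lemma pushout_stable_opposite: "pushout_stable (opposite C) K = pullback_stable C K"
  and pullback_stable_opposite: "pullback_stable (opposite C) K = pushout_stable C K"
  unfolding pushout_stable_def pullback_stable_def pushout_opposite pullback_opposite by auto

lemma adm_monics_swap: "adm_monics (prod.swap ` W) = adm_epics W"
  and adm_epics_swap: "adm_epics (prod.swap ` W) = adm_monics W"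
  unfolding adm_monics_def adm_epics_def image_image by simp_all

context preadditive_cat
begin

lemma preadditive_opposite: "preadditive (opposite C)"
proof -
  have "category (opposite C)" unfolding category_def by (auto simp: hom_iff)
  then show ?thesis
    unfolding preadditive_def
    by (auto simp: hom_iff comp_add_left comp_add_right add_assoc intro: add_commute)
qed

lemma dsum_opposite:
  "f \<in> Arr C \<Longrightarrow> g \<in> Arr C \<Longrightarrow> j1 \<in> Arr C \<Longrightarrow> j2 \<in> Arr C \<Longrightarrow> p1 \<in> Arr C \<Longrightarrow> p2 \<in> Arr C
   \<Longrightarrow> Cod C j1 = Dom C f \<Longrightarrow> Dom C p1 = Cod C f \<Longrightarrow> Cod C j2 = Dom C g \<Longrightarrow> Dom C p2 = Cod C g
   \<Longrightarrow> dsum (opposite C) p1 p2 j1 j2 f g = dsum C j1 j2 p1 p2 f g"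
  unfolding dsum_def by simp

lemma iso_closed_if_opposite:
  assumes "iso_closed (opposite C) K" "K \<subseteq> Arr C"
  shows "iso_closed C K"
  unfolding iso_closed_def
proof (intro ballI allI impI, elim conjE)
  fix f \<alpha> \<beta> assume f: "f \<in> K" and "iso C \<alpha>" "iso C \<beta>" "Cod C \<alpha> = Dom C f" "Dom C \<beta> = Cod C f"
  moreover from this have "\<alpha> \<in> Arr C" "\<beta> \<in> Arr C" unfolding iso_def by simp_all
  ultimately show "\<beta> \<cdot> (f \<cdot> \<alpha>) \<in> K"
    using assms unfolding iso_closed_def by (auto simp flip: comp_assoc)
qed

lemma dsum_closed_if_opposite:
  assumes "dsum_closed (opposite C) K" "K \<subseteq> Arr C"
  shows "dsum_closed C K"
  unfolding dsum_closed_def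
proof (intro ballI allI impI, elim conjE)
  fix f g S i1 i2 p1 p2 T j1 j2 q1 q2
  assume fg: "f \<in> K" "g \<in> K" and dom: "biprod C (Dom C f) (Dom C g) S i1 i2 p1 p2"
    and cod: "biprod C (Cod C f) (Cod C g) T j1 j2 q1 q2"
  have "biprod (opposite C) (Dom (opposite C) f) (Dom (opposite C) g) T q1 q2 j1 j2"
    "biprod (opposite C) (Cod (opposite C) f) (Cod (opposite C) g) S p1 p2 i1 i2"
    using dom cod by (simp_all add: biprod_opposite)
  then have "dsum (opposite C) j1 j2 p1 p2 f g \<in> K"
    using assms(1) fg unfolding dsum_closed_def by blast
  moreover have "dsum (opposite C) j1 j2 p1 p2 f g = dsum C p1 p2 j1 j2 f g"
    using fg assms(2) biprodD[OF dom] biprodD[OF cod] by (intro dsum_opposite) auto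
  ultimately show "dsum C p1 p2 j1 j2 f g \<in> K" by simp
qed

lemma left_weakly_exact_if_right_opposite:
  assumes "right_weakly_exact (opposite C) K" "K \<subseteq> Arr C"
  shows "left_weakly_exact C K"
  using assms iso_closed_if_opposite dsum_closed_if_opposite
  unfolding right_weakly_exact_def left_weakly_exact_def is_kernel_opposite has_cokernel_opposite
    pushout_stable_opposite
  by auto

end

lemma (in additive_cat) additive_category_opposite: "additive_category (opposite C)"
  unfolding additive_category_def biprod_opposite
proof (intro conjI ballI)
  obtain Z where "zero_obj C Z" using additive unfolding additive_category_def by blast
  then show "\<exists>Z. zero_obj (opposite C) Z" by auto
  fix A B assume "A \<in> Obj (opposite C)" "B \<in> Obj (opposite C)"
  then obtain S i1 i2 p1 p2 where "biprod C A B S i1 i2 p1 p2" by (auto elim: biprod_exists)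
  then show "\<exists>S i1 i2 p1 p2. biprod C A B S p1 p2 i1 i2" by blast
qed (rule preadditive_opposite)

section \<open>Weakly exact structures\<close>

locale weakly_exact_cat = additive_cat C for C :: "('o,'m) addcat" +
  fixes W :: "('m \<times> 'm) set"
  assumes weakly_exact: "weakly_exact C W"
begin

lemmas weakly_exact_clauses = weakly_exact[unfolded weakly_exact_def, THEN conjunct1]
  weakly_exact[unfolded weakly_exact_def, THEN conjunct2, THEN conjunct1]
  weakly_exact[unfolded weakly_exact_def, THEN conjunct2, THEN conjunct2, THEN conjunct1]
  weakly_exact[unfolded weakly_exact_def, THEN conjunct2, THEN conjunct2, THEN conjunct2,
    THEN conjunct1]

lemma W_kcpair: "(i, d) \<in> W \<Longrightarrow> kcpair C i d"
  using weakly_exact_clauses(1) by fast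

lemma W_iso:
  assumes "(i, d) \<in> W" "i' \<in> Arr C" "d' \<in> Arr C" "Cod C i' = Dom C d'"
    "iso C \<alpha>" "iso C \<beta>" "iso C \<gamma>"
    "\<alpha> \<in> hom C (Dom C i) (Dom C i')" "\<beta> \<in> hom C (Cod C i) (Cod C i')"
    "\<gamma> \<in> hom C (Cod C d) (Cod C d')" "\<beta> \<cdot> i = i' \<cdot> \<alpha>" "\<gamma> \<cdot> d = d' \<cdot> \<beta>"
  shows "(i', d') \<in> W"
  using weakly_exact_clauses(2) assms by fast

lemma W_zero: "zero_obj C Z \<Longrightarrow> (Id C Z, Id C Z) \<in> W"
  using weakly_exact_clauses(3) by blast

lemma W_dsum:
  assumes "(i, d) \<in> W" "(i', d') \<in> W"
    "biprod C (Dom C i) (Dom C i') SA a1 a2 r1 r2"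
    "biprod C (Cod C i) (Cod C i') SB b1 b2 s1 s2"
    "biprod C (Cod C d) (Cod C d') SC c1 c2 t1 t2"
  shows "(dsum C r1 r2 b1 b2 i i', dsum C s1 s2 c1 c2 d d') \<in> W"
  using weakly_exact_clauses(4) assms by fast

lemma id_adm_monic: "X \<in> Obj C \<Longrightarrow> Id C X \<in> adm_monics W"
  and id_adm_epic: "X \<in> Obj C \<Longrightarrow> Id C X \<in> adm_epics W"
  using weakly_exact unfolding weakly_exact_def by blast+

lemma pushout_stable_adm_monics: "pushout_stable C (adm_monics W)"
  and pullback_stable_adm_epics: "pullback_stable C (adm_epics W)"
  using weakly_exact unfolding weakly_exact_def by blast+

lemma adm_monics_iff: "i \<in> adm_monics W \<longleftrightarrow> (\<exists>d. (i, d) \<in> W)"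
  unfolding adm_monics_def by force

lemma adm_epics_iff: "d \<in> adm_epics W \<longleftrightarrow> (\<exists>i. (i, d) \<in> W)"
  unfolding adm_epics_def by force

lemma adm_epics_arr: "d \<in> adm_epics W \<Longrightarrow> d \<in> Arr C"
  using W_kcpair cokernel_ofD unfolding adm_epics_iff kcpair_def by blast

lemma kcpair_in_W:
  assumes kc: "kcpair C i d" and d: "d \<in> adm_epics W"
  shows "(i, d) \<in> W"
proof -
  obtain k where kW: "(k, d) \<in> W" using d unfolding adm_epics_iff by blast
  have k: "is_kernel_of C k d" and i: "is_kernel_of C i d"
    using W_kcpair[OF kW] kc unfolding kcpair_def by simp_all
  obtain \<beta> where \<beta>: "iso C \<beta>" "\<beta> \<in> hom C (Dom C k) (Dom C i)" "i \<cdot> \<beta> = k"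
    using kernels_iso[OF i k] .
  note i' = kernel_ofD[OF i] and k' = kernel_ofD[OF k]
  show ?thesis
    by (rule W_iso[OF kW, of i d \<beta> "Id C (Cod C k)" "Id C (Cod C d)"])
      (use i' k' \<beta> in \<open>simp_all add: iso_id hom_iff\<close>)
qed

lemma W_eq_kcpairs: "W = {(i, d). kcpair C i d \<and> i \<in> adm_monics W \<and> d \<in> adm_epics W}"
  using W_kcpair kcpair_in_W unfolding adm_monics_iff adm_epics_iff by blast

lemma iso_closed_adm_monics: "iso_closed C (adm_monics W)"
  unfolding iso_closed_def
proof (intro ballI allI impI, elim conjE)
  fix f \<alpha> \<beta> assume "f \<in> adm_monics W" and \<alpha>: "iso C \<alpha>" and \<beta>: "iso C \<beta>"
    and "Cod C \<alpha> = Dom C f" "Dom C \<beta> = Cod C f"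
  then obtain d where fW: "(f, d) \<in> W" unfolding adm_monics_iff by blast
  note f = kernel_ofD[OF W_kcpair[OF fW, unfolded kcpair_def, THEN conjunct1]]
  obtain \<alpha>' where \<alpha>': "\<alpha>' \<in> Arr C" "Dom C \<alpha>' = Cod C \<alpha>" "Cod C \<alpha>' = Dom C \<alpha>"
    "\<alpha>' \<cdot> \<alpha> = Id C (Dom C \<alpha>)" "\<alpha> \<cdot> \<alpha>' = Id C (Cod C \<alpha>)" "iso C \<alpha>'"
    using \<alpha> by (rule isoE)
  obtain \<beta>' where \<beta>': "\<beta>' \<in> Arr C" "Dom C \<beta>' = Cod C \<beta>" "Cod C \<beta>' = Dom C \<beta>"
    "\<beta>' \<cdot> \<beta> = Id C (Dom C \<beta>)" "\<beta> \<cdot> \<beta>' = Id C (Cod C \<beta>)"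
    using \<beta> by (rule isoE)
  have arr: "\<alpha> \<in> Arr C" "\<beta> \<in> Arr C" using \<alpha> \<beta> unfolding iso_def by simp_all
  have "(\<beta> \<cdot> (f \<cdot> \<alpha>), d \<cdot> \<beta>') \<in> W"
  proof (rule W_iso[OF fW, of _ _ \<alpha>' \<beta> "Id C (Cod C d)"])
    show "\<beta> \<cdot> f = (\<beta> \<cdot> (f \<cdot> \<alpha>)) \<cdot> \<alpha>'"
      using \<alpha>' \<beta>' arr f \<open>Cod C \<alpha> = Dom C f\<close> \<open>Dom C \<beta> = Cod C f\<close> by simp
    show "Id C (Cod C d) \<cdot> d = (d \<cdot> \<beta>') \<cdot> \<beta>"
      using \<alpha>' \<beta>' arr f \<open>Cod C \<alpha> = Dom C f\<close> \<open>Dom C \<beta> = Cod C f\<close> by simp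
  qed (use \<alpha>' \<beta>' arr f \<beta> \<open>Cod C \<alpha> = Dom C f\<close> \<open>Dom C \<beta> = Cod C f\<close> in
       \<open>simp_all add: iso_id hom_iff\<close>)
  then show "\<beta> \<cdot> (f \<cdot> \<alpha>) \<in> adm_monics W" unfolding adm_monics_iff by blast
qed

lemma zero_obj_adm_monic: "zero_obj C Z \<Longrightarrow> f \<in> hom C Z X \<Longrightarrow> f \<in> adm_monics W"
  using kcpair_in_W[OF kcpair_from_zero_obj id_adm_epic] unfolding adm_monics_iff hom_iff by auto

lemma dsum_closed_adm_monics: "dsum_closed C (adm_monics W)"
  unfolding dsum_closed_def
proof (intro ballI allI impI, elim conjE)
  fix f g S i1 i2 p1 p2 T j1 j2 q1 q2
  assume "f \<in> adm_monics W" "g \<in> adm_monics W"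
    and dom: "biprod C (Dom C f) (Dom C g) S i1 i2 p1 p2"
    and cod: "biprod C (Cod C f) (Cod C g) T j1 j2 q1 q2"
  then obtain d d' where fW: "(f, d) \<in> W" and gW: "(g, d') \<in> W"
    unfolding adm_monics_iff by blast
  have "d \<in> Arr C" "d' \<in> Arr C"
    using fW gW adm_epics_arr unfolding adm_epics_iff by blast+
  then obtain U k1 k2 r1 r2 where "biprod C (Cod C d) (Cod C d') U k1 k2 r1 r2"
    using biprod_exists by (meson cod_obj)
  from W_dsum[OF fW gW dom cod this] show "dsum C p1 p2 j1 j2 f g \<in> adm_monics W"
    unfolding adm_monics_iff by blast
qed

lemma adm_monic_cancel:
  assumes a: "a \<in> Arr C" and b: "b \<in> Arr C" "Cod C a = Dom C b"
    and ba: "b \<cdot> a \<in> adm_monics W" and "has_cokernel C a"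
  shows "a \<in> adm_monics W"
proof -
  obtain d where baW: "(b \<cdot> a, d) \<in> W" using ba unfolding adm_monics_iff by blast
  then have ba_ker: "is_kernel_of C (b \<cdot> a) d" and d: "is_cokernel_of C d (b \<cdot> a)"
    using W_kcpair unfolding kcpair_def by blast+
  obtain q where q: "is_cokernel_of C q a"
    using \<open>has_cokernel C a\<close> unfolding has_cokernel_def by blast
  obtain S j1 j2 p1 p2 where "biprod C (Cod C q) (Cod C b) S j1 j2 p1 p2"
    using biprod_exists q b cokernel_ofD by (meson cod_obj)
  then interpret cokernel_pairing C a b q S j1 j2 p1 p2 "j1 \<cdot> q \<oplus> j2 \<cdot> b"
    using a b q by unfold_locales simp_all
  have "Dom C a = Dom C (b \<cdot> a)" using a b by simp
  with ba a have "j1 \<cdot> q \<oplus> j2 \<cdot> b \<in> adm_monics W"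
    using pushout_stable_adm_monics pushout_pairing unfolding pushout_stable_def by blast
  then obtain e where e: "is_kernel_of C (j1 \<cdot> q \<oplus> j2 \<cdot> b) e"
    using W_kcpair unfolding adm_monics_iff kcpair_def by blast
  obtain t where t: "t \<in> Arr C" "Dom C t = Cod C q" "Cod C t = Cod C d" "t \<cdot> q = d \<cdot> b"
    using cokernel_factor[OF q, of "d \<cdot> b"] cokernel_ofD[OF d] a b by auto
  have "d \<in> adm_epics W" using baW unfolding adm_epics_iff by blast
  then have "q \<in> adm_epics W"
    using pullback_stable_adm_epics pullback_pairing[OF d t e] t
    unfolding pullback_stable_def by blast
  moreover have "kcpair C a q"
    using kernel_of_pairing_cokernel[OF d t e ba_ker] q unfolding kcpair_def by simp
  ultimately have "(a, q) \<in> W" by (intro kcpair_in_W)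
  then show ?thesis unfolding adm_monics_iff by blast
qed

lemma right_weakly_exact_adm_monics: "right_weakly_exact C (adm_monics W)"
  unfolding right_weakly_exact_def
proof (intro conjI ballI allI impI)
  show "is_kernel C i" if "i \<in> adm_monics W" for i
    using that W_kcpair unfolding adm_monics_iff kcpair_def is_kernel_def by blast
qed (use iso_closed_adm_monics id_adm_monic zero_obj_adm_monic pushout_stable_adm_monics
      adm_monic_cancel dsum_closed_adm_monics in blast)+

lemma W_iso_inverse:
  assumes W: "(i, d) \<in> W" and i'd': "i' \<in> Arr C" "d' \<in> Arr C" "Cod C i' = Dom C d'"
    and iso: "iso C \<alpha>" "iso C \<beta>" "iso C \<gamma>"
    and hom: "\<alpha> \<in> hom C (Dom C i') (Dom C i)" "\<beta> \<in> hom C (Cod C i') (Dom C d)"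
      "\<gamma> \<in> hom C (Cod C d') (Cod C d)"
    and sq: "i \<cdot> \<alpha> = \<beta> \<cdot> i'" "d \<cdot> \<beta> = \<gamma> \<cdot> d'"
  shows "(i', d') \<in> W"
proof -
  obtain \<alpha>' where \<alpha>': "\<alpha>' \<in> Arr C" "Dom C \<alpha>' = Cod C \<alpha>" "Cod C \<alpha>' = Dom C \<alpha>"
    "\<alpha>' \<cdot> \<alpha> = Id C (Dom C \<alpha>)" "\<alpha> \<cdot> \<alpha>' = Id C (Cod C \<alpha>)" "iso C \<alpha>'"
    using iso(1) by (rule isoE)
  obtain \<beta>' where \<beta>': "\<beta>' \<in> Arr C" "Dom C \<beta>' = Cod C \<beta>" "Cod C \<beta>' = Dom C \<beta>"
    "\<beta>' \<cdot> \<beta> = Id C (Dom C \<beta>)" "\<beta> \<cdot> \<beta>' = Id C (Cod C \<beta>)" "iso C \<beta>'"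
    using iso(2) by (rule isoE)
  obtain \<gamma>' where \<gamma>': "\<gamma>' \<in> Arr C" "Dom C \<gamma>' = Cod C \<gamma>" "Cod C \<gamma>' = Dom C \<gamma>"
    "\<gamma>' \<cdot> \<gamma> = Id C (Dom C \<gamma>)" "\<gamma> \<cdot> \<gamma>' = Id C (Cod C \<gamma>)" "iso C \<gamma>'"
    using iso(3) by (rule isoE)
  note ids = kernel_ofD[OF W_kcpair[OF W, unfolded kcpair_def, THEN conjunct1]]
  note hom' = hom[unfolded hom_iff]
  have "\<beta>' \<cdot> i = \<beta>' \<cdot> (i \<cdot> (\<alpha> \<cdot> \<alpha>'))" using \<alpha>' ids hom' by simp
  also have "\<dots> = \<beta>' \<cdot> ((i \<cdot> \<alpha>) \<cdot> \<alpha>')" using \<alpha>' ids hom' by simp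
  also have "\<dots> = i' \<cdot> \<alpha>'" unfolding sq(1) using \<alpha>' \<beta>' hom' i'd' by (simp flip: comp_assoc)
  finally have sq1: "\<beta>' \<cdot> i = i' \<cdot> \<alpha>'" .
  have "\<gamma>' \<cdot> d = \<gamma>' \<cdot> (d \<cdot> (\<beta> \<cdot> \<beta>'))" using \<beta>' ids hom' by simp
  also have "\<dots> = \<gamma>' \<cdot> ((d \<cdot> \<beta>) \<cdot> \<beta>')" using \<beta>' ids hom' by simp
  also have "\<dots> = d' \<cdot> \<beta>'" unfolding sq(2) using \<beta>' \<gamma>' hom' i'd' by (simp flip: comp_assoc)
  finally have sq2: "\<gamma>' \<cdot> d = d' \<cdot> \<beta>'" .
  show ?thesis
    by (rule W_iso[OF W i'd' \<alpha>'(6) \<beta>'(6) \<gamma>'(6) _ _ _ sq1 sq2])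
      (use \<alpha>' \<beta>' \<gamma>' hom' ids in \<open>simp_all add: hom_iff\<close>)
qed

lemma W_dsum_opposite:
  assumes W: "(i, d) \<in> W" "(i', d') \<in> W"
    and A: "biprod (opposite C) (Cod C d) (Cod C d') SA a1 a2 r1 r2"
    and B: "biprod (opposite C) (Dom C d) (Dom C d') SB b1 b2 s1 s2"
    and C: "biprod (opposite C) (Dom C i) (Dom C i') SC c1 c2 t1 t2"
  shows "(dsum (opposite C) s1 s2 c1 c2 i i', dsum (opposite C) r1 r2 b1 b2 d d') \<in> W"
proof -
  note i = kernel_ofD[OF W_kcpair[OF W(1), unfolded kcpair_def, THEN conjunct1]]
    and i' = kernel_ofD[OF W_kcpair[OF W(2), unfolded kcpair_def, THEN conjunct1]]
  have A': "biprod C (Cod C d) (Cod C d') SA r1 r2 a1 a2"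
    and B': "biprod C (Cod C i) (Cod C i') SB s1 s2 b1 b2"
    and C': "biprod C (Dom C i) (Dom C i') SC t1 t2 c1 c2"
    using A B C i i' by (simp_all add: biprod_opposite)
  have "dsum (opposite C) s1 s2 c1 c2 i i' = dsum C c1 c2 s1 s2 i i'"
    using i i' biprodD[OF C'] biprodD[OF B'] by (intro dsum_opposite) simp_all
  moreover have "dsum (opposite C) r1 r2 b1 b2 d d' = dsum C b1 b2 r1 r2 d d'"
    using i i' biprodD[OF B'] biprodD[OF A'] by (intro dsum_opposite) simp_all
  ultimately show ?thesis using W_dsum[OF W C' B' A'] by simp
qed

lemma weakly_exact_opposite: "weakly_exact (opposite C) (prod.swap ` W)"
  unfolding weakly_exact_def adm_monics_swap adm_epics_swap
    pushout_stable_opposite pullback_stable_opposite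
  using W_kcpair W_zero id_adm_monic id_adm_epic pushout_stable_adm_monics pullback_stable_adm_epics
  by (auto simp: kcpair_opposite intro: W_iso_inverse W_dsum_opposite)

end

theorem mainTheorem6:
  fixes C :: "('o,'m) addcat" and W :: "('m \<times> 'm) set"
  assumes "additive_category C" and "weakly_exact C W"
  shows "right_weakly_exact C (adm_monics W) \<and> left_weakly_exact C (adm_epics W) \<and>
         W = {(i,d). kcpair C i d \<and> i \<in> adm_monics W \<and> d \<in> adm_epics W}"
proof -
  interpret weakly_exact_cat C W
    using assms by unfold_locales
  interpret op: weakly_exact_cat "opposite C" "prod.swap ` W"
    using additive_category_opposite weakly_exact_opposite by unfold_locales
  have "right_weakly_exact (opposite C) (adm_epics W)"
    using op.right_weakly_exact_adm_monics by (simp add: adm_monics_swap)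
  then have "left_weakly_exact C (adm_epics W)"
    using adm_epics_arr by (intro left_weakly_exact_if_right_opposite) auto
  then show ?thesis using right_weakly_exact_adm_monics W_eq_kcpairs by simp
qed

end
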